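(* Let $\alpha\in(0,1)$ and $A\in\Omega^1_{\mathrm{gr}\alpha}$. Then $A$ is a continuous function on $\mathcal X$, and $$\lim_{\varepsilon\to0}\sup_{|\ell|<\varepsilon}|\ell|^{-\alpha}|A(\ell)|=0.$$
   Context: $E$ is a Banach space; $\mathbf T^2=[-\frac12,\frac12)^2$ with geodesic distance; $\mathcal X=\mathbf T^2\times\{v\in\mathbb R^2:|v|\le\frac14\}$ with $\ell=(x,v)$, $\ell_i=x$, $\ell_f=x+v$, $|\ell|=|v|$, metrised by $d(\ell,\bar\ell)=|\ell_i-\bar\ell_i|\vee|\ell_f-\bar\ell_f|$. $\Omega$ is the space of measurable $A:\mathcal X\to E$ additive under concatenation of joinable collinear segments; $|A|_{\mathrm{gr}\alpha}=\sup_{|\ell|>0}|A(\ell)|/|\ell|^\alpha$ and $\Omega_{\mathrm{gr}\alpha}=\{A:|A|_{\mathrm{gr}\alpha}<\infty\}$. For a continuous $E$-valued 1-form $A=A_1dx_1+A_2dx_2$, $\iota A(x,v)=\int_0^1\sum_iA_i(x+tv)v_i\,dt$. $\Omega^1_{\mathrm{gr}\alpha}$ is the closure of $\iota(\text{smooth }E\text{-valued 1-forms})$ in $\Omega_{\mathrm{gr}\alpha}$. *)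

theory Defs
  imports "HOL-Analysis.Analysis"
begin

text \<open>Torus T^2 = [-1/2,1/2)^2 represented inside real^2.\<close>
definition T2 :: "(real^2) set" where
  "T2 = {x. \<forall>i. -1/2 \<le> x$i \<and> x$i < 1/2}"

definition tor_wrap :: "real^2 \<Rightarrow> real^2" where
  "tor_wrap y = (\<chi> i. y$i - of_int \<lfloor>y$i + 1/2\<rfloor>)"

definition tor_dist :: "real^2 \<Rightarrow> real^2 \<Rightarrow> real" where
  "tor_dist x y = Inf {norm (x - y - k) | k::real^2. \<forall>i. k$i \<in> \<int>}"

text \<open>Line segments l = (x,v): l_i = x, l_f = x+v (on the torus), |l| = |v|.\<close>
definition Xsp :: "((real^2) \<times> (real^2)) set" where
  "Xsp = {(x,v). x \<in> T2 \<and> norm v \<le> 1/4}"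

definition seg_i :: "(real^2) \<times> (real^2) \<Rightarrow> real^2" where
  "seg_i l = fst l"

definition seg_f :: "(real^2) \<times> (real^2) \<Rightarrow> real^2" where
  "seg_f l = tor_wrap (fst l + snd l)"

definition seg_len :: "(real^2) \<times> (real^2) \<Rightarrow> real" where
  "seg_len l = norm (snd l)"

definition seg_dist :: "(real^2) \<times> (real^2) \<Rightarrow> (real^2) \<times> (real^2) \<Rightarrow> real" where
  "seg_dist l m = max (tor_dist (seg_i l) (seg_i m)) (tor_dist (seg_f l) (seg_f m))"

definition Omega :: "((real^2) \<times> (real^2) \<Rightarrow> 'e::banach) set" where
  "Omega = {A. A \<in> borel_measurable (restrict_space borel Xsp) \<and>
     (\<forall>x v w. x \<in> T2 \<longrightarrow> norm (v + w) \<le> 1/4 \<longrightarrow>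
        (v = 0 \<or> w = 0 \<or> (\<exists>t>0. w = t *\<^sub>R v)) \<longrightarrow>
        A (x, v + w) = A (x, v) + A (tor_wrap (x + v), w))}"

text \<open>The condition |A|_{gr alpha} \<le> C (i.e. the supremum is at most C).\<close>
definition gr_bounded :: "real \<Rightarrow> real \<Rightarrow> ((real^2) \<times> (real^2) \<Rightarrow> 'e::real_normed_vector) \<Rightarrow> bool" where
  "gr_bounded \<alpha> C A \<longleftrightarrow> (\<forall>l\<in>Xsp. seg_len l > 0 \<longrightarrow> norm (A l) \<le> C * seg_len l powr \<alpha>)"

definition Omega_gr :: "real \<Rightarrow> ((real^2) \<times> (real^2) \<Rightarrow> 'e::banach) set" where
  "Omega_gr \<alpha> = {A. A \<in> Omega \<and> (\<exists>C. gr_bounded \<alpha> C A)}"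

primrec Ck :: "nat \<Rightarrow> (real^2 \<Rightarrow> 'e::real_normed_vector) \<Rightarrow> bool" where
  "Ck 0 f = continuous_on UNIV f"
| "Ck (Suc n) f = (\<exists>f'. (\<forall>x. (f has_derivative f' x) (at x)) \<and> (\<forall>h. Ck n (\<lambda>x. f' x h))
                       \<and> continuous_on UNIV f)"

definition smooth_fun :: "(real^2 \<Rightarrow> 'e::real_normed_vector) \<Rightarrow> bool" where
  "smooth_fun f \<longleftrightarrow> (\<forall>n. Ck n f)"

text \<open>A smooth E-valued 1-form A_1 dx_1 + A_2 dx_2 on the torus: two smooth
  Z^2-periodic coefficient functions on R^2.\<close>
definition smooth_form :: "(2 \<Rightarrow> real^2 \<Rightarrow> 'e::real_normed_vector) \<Rightarrow> bool" where
  "smooth_form F \<longleftrightarrow> (\<forall>i. smooth_fun (F i) \<and>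
      (\<forall>x k. (\<forall>j. k$j \<in> \<int>) \<longrightarrow> F i (x + k) = F i x))"

definition iota :: "(2 \<Rightarrow> real^2 \<Rightarrow> 'e::banach) \<Rightarrow> (real^2) \<times> (real^2) \<Rightarrow> 'e" where
  "iota F l = integral {0..1} (\<lambda>t. \<Sum>i\<in>UNIV. (snd l $ i) *\<^sub>R F i (fst l + t *\<^sub>R snd l))"

text \<open>Omega^1_{gr alpha}: closure of iota(smooth 1-forms) in Omega_{gr alpha}.\<close>
definition Omega1_gr :: "real \<Rightarrow> ((real^2) \<times> (real^2) \<Rightarrow> 'e::banach) set" where
  "Omega1_gr \<alpha> = {A. A \<in> Omega_gr \<alpha> \<and>
      (\<forall>\<epsilon>>0. \<exists>F. smooth_form F \<and> gr_bounded \<alpha> \<epsilon> (\<lambda>l. A l - iota F l))}"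

definition cont_on_X :: "((real^2) \<times> (real^2) \<Rightarrow> 'e::real_normed_vector) \<Rightarrow> bool" where
  "cont_on_X A \<longleftrightarrow> (\<forall>l\<in>Xsp. \<forall>e>0. \<exists>\<delta>>0. \<forall>m\<in>Xsp. seg_dist l m < \<delta> \<longrightarrow> norm (A m - A l) < e)"

end

theory Submission
  imports Defs
begin

text \<open>Since every segment has length at most 1/4, approximation of A by \<iota>F in
  the gr-\<alpha> seminorm is uniform approximation on X. Each \<iota>F is a parametric
  integral of a continuous integrand, hence continuous on R^2 \<times> R^2, and it is
  invariant under integer translations of the starting point; as d-close segments
  have lattice-close starting points and close direction vectors, \<iota>F is continuous
  on X, and so is its uniform limit A. For the second claim,
  |A(l)| \<le> \<epsilon>|l|^\<alpha> + |\<iota>F(l)| \<le> \<epsilon>|l|^\<alpha> + 2M|l| with M a bound on the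
  coefficients of F, and |l|^(1-\<alpha>) \<rightarrow> 0.\<close>

lemma smooth_form_continuous: "smooth_form F \<Longrightarrow> continuous_on UNIV (F i)"
  unfolding smooth_form_def smooth_fun_def by (metis Ck.simps(1))

lemma smooth_form_periodic: "smooth_form F \<Longrightarrow> \<forall>j. k$j \<in> \<int> \<Longrightarrow> F i (x + k) = F i x"
  unfolding smooth_form_def by blast

lemma tor_wrap_T2:
  assumes "x \<in> T2"
  shows "tor_wrap x = x"
proof -
  have "\<lfloor>x$i + 1/2\<rfloor> = 0" for i
  proof -
    have "-1/2 \<le> x$i \<and> x$i < 1/2"
      using assms unfolding T2_def by simp
    then show ?thesis
      by (simp add: floor_eq_iff)
  qed
  then show ?thesis
    unfolding tor_wrap_def by (simp add: vec_eq_iff)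
qed

lemma tor_wrap_eq_diff_int:
  obtains k where "\<forall>i. k$i \<in> \<int>" "tor_wrap y = y - k"
  by (rule that[of "\<chi> i. of_int \<lfloor>y$i + 1/2\<rfloor>"]) (auto simp: tor_wrap_def vec_eq_iff)

lemma tor_dist_lessE:
  assumes "tor_dist a b < d"
  obtains k where "\<forall>i. k$i \<in> \<int>" "norm (a - b - k) < d"
proof -
  have "{norm (a - b - k) | k::real^2. \<forall>i. k$i \<in> \<int>} \<noteq> {}"
    by (auto intro!: exI[of _ 0])
  from cInf_lessD[OF this] assms that show ?thesis
    unfolding tor_dist_def by blast
qed

lemma unit_cube_representative:
  fixes x :: "real^2"
  obtains k where "\<forall>i. k$i \<in> \<int>" "x - k \<in> cbox 0 1"
proof (rule that[of "\<chi> j. of_int \<lfloor>x$j\<rfloor>"])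
  have "0 \<le> x$j - of_int \<lfloor>x$j\<rfloor> \<and> x$j - of_int \<lfloor>x$j\<rfloor> \<le> 1" for j
    using of_int_floor_le[of "x$j"] real_of_int_floor_add_one_gt[of "x$j"] by linarith
  then show "x - (\<chi> j. of_int \<lfloor>x$j\<rfloor>) \<in> cbox 0 1"
    by (simp add: mem_box_cart)
qed simp

lemma norm_int_vector_ge_1:
  fixes k :: "real^'n"
  assumes "\<forall>i. k$i \<in> \<int>" "k \<noteq> 0"
  shows "1 \<le> norm k"
proof -
  obtain i where "k$i \<noteq> 0"
    using assms(2) by (metis vec_eq_iff zero_index)
  moreover have "k$i \<in> \<int>"
    using assms(1) by blast
  ultimately have "1 \<le> \<bar>k$i\<bar>"
    by (metis Ints_nonzero_abs_ge1)
  then show ?thesis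
    using component_le_norm_cart[of k i] by linarith
qed

lemma seg_dist_less_imp_close_lift:
  assumes "norm v \<le> 1/4" "norm w \<le> 1/4" "\<delta> \<le> 1/4" "seg_dist (x, v) (y, w) < \<delta>"
  obtains k where "\<forall>i. k$i \<in> \<int>" "norm (y + k - x) < \<delta>" "norm (w - v) < 2 * \<delta>"
proof -
  have "tor_dist x y < \<delta>" "tor_dist (tor_wrap (x + v)) (tor_wrap (y + w)) < \<delta>"
    using assms(4) unfolding seg_dist_def seg_i_def seg_f_def by auto
  then obtain k1 k2 kx ky where int: "\<forall>i. k1$i \<in> \<int>" "\<forall>i. k2$i \<in> \<int>" "\<forall>i. kx$i \<in> \<int>" "\<forall>i. ky$i \<in> \<int>"
    and k1: "norm (x - y - k1) < \<delta>"
    and k2: "norm (tor_wrap (x + v) - tor_wrap (y + w) - k2) < \<delta>"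
    and kx: "tor_wrap (x + v) = x + v - kx"
    and ky: "tor_wrap (y + w) = y + w - ky"
    by (metis tor_dist_lessE tor_wrap_eq_diff_int)
  define K where "K = k1 - kx + ky - k2"
  have "v - w + K = (tor_wrap (x + v) - tor_wrap (y + w) - k2) - (x - y - k1)"
    unfolding K_def kx ky by (simp add: algebra_simps)
  then have close: "norm (v - w + K) < 2 * \<delta>"
    using k1 k2 norm_triangle_ineq4 by (smt (verit))
  \<comment> \<open>both segments are shorter than 1/4, so the endpoint lifts cannot differ by a
      nonzero lattice vector\<close>
  have "K = 0"
  proof (rule ccontr)
    assume "K \<noteq> 0"
    moreover have "\<forall>i. K$i \<in> \<int>"
      using int unfolding K_def by simp
    ultimately have "1 \<le> norm K"
      by (rule norm_int_vector_ge_1[rotated])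
    moreover have "norm K \<le> norm (v - w + K) + norm v + norm w"
      by (smt (verit) norm_triangle_ineq4 norm_diff_ineq add_diff_cancel_left')
    ultimately show False
      using close assms(1-3) by linarith
  qed
  show ?thesis
  proof (rule that[OF int(1)])
    show "norm (y + k1 - x) < \<delta>"
      using k1 by (simp add: norm_minus_commute algebra_simps)
    show "norm (w - v) < 2 * \<delta>"
      using close \<open>K = 0\<close> by (simp add: norm_minus_commute)
  qed
qed

lemma smooth_form_bounded:
  assumes "smooth_form F"
  obtains M where "0 < M" "\<And>i x. norm (F i x) \<le> M"
proof -
  let ?g = "\<lambda>x. \<Sum>i\<in>UNIV. norm (F i x)"
  have "continuous_on (cbox 0 1) ?g"
    by (intro continuous_intros continuous_on_subset[OF smooth_form_continuous[OF assms]]) simp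
  then have "bounded (?g ` cbox 0 1)"
    by (intro compact_imp_bounded compact_continuous_image compact_cbox)
  then obtain M where "0 < M" and M: "\<And>x. x \<in> cbox 0 1 \<Longrightarrow> ?g x \<le> M"
    unfolding bounded_pos by force
  have "norm (F i x) \<le> M" for i x
  proof -
    obtain k where k: "\<forall>j. k$j \<in> \<int>" "x - k \<in> cbox 0 1"
      by (rule unit_cube_representative)
    have "norm (F i x) = norm (F i (x - k))"
      using smooth_form_periodic[OF assms k(1), of i "x - k"] by simp
    also have "\<dots> \<le> ?g (x - k)"
      by (rule member_le_sum) auto
    also have "\<dots> \<le> M"
      using M k(2) by blast
    finally show ?thesis .
  qed
  with \<open>0 < M\<close> show ?thesis
    using that by blast
qed

lemma continuous_on_iota:
  assumes "smooth_form F"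
  shows "continuous_on UNIV (iota F)"
proof -
  note F_cont = continuous_on_compose2[OF smooth_form_continuous[OF assms] _ subset_UNIV]
  have "continuous_on (UNIV \<times> cbox 0 1)
      (\<lambda>(l, t::real). \<Sum>i\<in>UNIV. (snd l $ i) *\<^sub>R F i (fst l + t *\<^sub>R snd l))"
    by (auto simp: case_prod_unfold intro!: continuous_intros F_cont)
  then have "continuous_on UNIV (\<lambda>l. integral (cbox 0 1)
      (\<lambda>t::real. \<Sum>i\<in>UNIV. (snd l $ i) *\<^sub>R F i (fst l + t *\<^sub>R snd l)))"
    by (rule integral_continuous_on_param)
  then show ?thesis
    unfolding iota_def by simp
qed

lemma iota_translate_int:
  assumes "smooth_form F" "\<forall>j. k$j \<in> \<int>"
  shows "iota F (x + k, v) = iota F (x, v)"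
proof -
  have "F i (x + k + t *\<^sub>R v) = F i (x + t *\<^sub>R v)" for i t
    using smooth_form_periodic[OF assms, of i "x + t *\<^sub>R v"] by (simp add: algebra_simps)
  then show ?thesis
    unfolding iota_def by simp
qed

lemma iota_zero_length: "iota F (x, 0) = 0"
  unfolding iota_def by simp

lemma norm_iota_le:
  assumes "smooth_form F" "\<And>i x. norm (F i x) \<le> M"
  shows "norm (iota F (x, v)) \<le> 2 * M * norm v"
proof -
  have "norm (integral {0..1} (\<lambda>t. \<Sum>i\<in>UNIV. (v $ i) *\<^sub>R F i (x + t *\<^sub>R v)))
      \<le> (2 * M * norm v) * (1 - 0)"
  proof (rule integral_bound)
    show "continuous_on {0..1} (\<lambda>t. \<Sum>i\<in>UNIV. (v $ i) *\<^sub>R F i (x + t *\<^sub>R v))"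
      by (intro continuous_intros continuous_on_compose2[OF smooth_form_continuous[OF assms(1)]]) auto
    fix t :: real
    have "norm ((v $ i) *\<^sub>R F i (x + t *\<^sub>R v)) \<le> norm v * M" for i
      using mult_mono[OF component_le_norm_cart[of v i] assms(2)] by simp
    then have "(\<Sum>i\<in>UNIV. norm ((v $ i) *\<^sub>R F i (x + t *\<^sub>R v))) \<le> CARD(2) * (norm v * M)"
      by (intro sum_bounded_above) auto
    then show "norm (\<Sum>i\<in>UNIV. (v $ i) *\<^sub>R F i (x + t *\<^sub>R v)) \<le> 2 * M * norm v"
      using norm_sum[of "\<lambda>i. (v $ i) *\<^sub>R F i (x + t *\<^sub>R v)" UNIV] by (simp add: mult_ac)
  qed simp
  then show ?thesis
    unfolding iota_def by simp
qed

lemma cont_on_X_iota: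
  assumes "smooth_form F"
  shows "cont_on_X (iota F)"
  unfolding cont_on_X_def
proof (intro ballI allI impI)
  fix l e
  assume "l \<in> Xsp" "(0::real) < e"
  obtain x v where l: "l = (x, v)" and v: "norm v \<le> 1/4"
    using \<open>l \<in> Xsp\<close> unfolding Xsp_def by auto
  obtain \<eta> where "0 < \<eta>" and \<eta>: "\<And>p. dist p (x, v) < \<eta> \<Longrightarrow> dist (iota F p) (iota F (x, v)) < e"
    using continuous_on_iff[THEN iffD1, OF continuous_on_iota[OF assms]] \<open>0 < e\<close> by blast
  define \<delta> where "\<delta> = min (1/4) (\<eta>/3)"
  show "\<exists>\<delta>>0. \<forall>m\<in>Xsp. seg_dist l m < \<delta> \<longrightarrow> norm (iota F m - iota F l) < e"
  proof (intro exI[of _ \<delta>] conjI ballI impI)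
    show "0 < \<delta>"
      using \<open>0 < \<eta>\<close> unfolding \<delta>_def by simp
    fix m
    assume "m \<in> Xsp" "seg_dist l m < \<delta>"
    obtain y w where m: "m = (y, w)" and w: "norm w \<le> 1/4"
      using \<open>m \<in> Xsp\<close> unfolding Xsp_def by auto
    have "\<delta> \<le> 1/4" "\<delta> \<le> \<eta>/3"
      unfolding \<delta>_def by auto
    then obtain k where k: "\<forall>i. k$i \<in> \<int>" "norm (y + k - x) < \<delta>" "norm (w - v) < 2 * \<delta>"
      using seg_dist_less_imp_close_lift v w \<open>seg_dist l m < \<delta>\<close> unfolding l m by blast
    have "dist (y + k, w) (x, v) \<le> norm (y + k - x) + norm (w - v)"
      using norm_Pair_le[of "y + k - x" "w - v"] by (simp add: dist_norm)
    also have "\<dots> < \<eta>"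
      using k \<open>\<delta> \<le> \<eta>/3\<close> by linarith
    finally have "dist (iota F (y + k, w)) (iota F (x, v)) < e"
      by (rule \<eta>)
    then show "norm (iota F m - iota F l) < e"
      unfolding l m iota_translate_int[OF assms k(1)] by (simp add: dist_norm)
  qed
qed

lemma gr_bounded_imp_norm_le:
  assumes "gr_bounded \<alpha> \<epsilon> B" "0 \<le> \<epsilon>" "0 < \<alpha>" "\<And>x. x \<in> T2 \<Longrightarrow> B (x, 0) = 0" "l \<in> Xsp"
  shows "norm (B l) \<le> \<epsilon>"
proof (cases "seg_len l = 0")
  case True
  with assms(4,5) show ?thesis
    unfolding Xsp_def seg_len_def by (auto simp: \<open>0 \<le> \<epsilon>\<close>)
next
  case False
  have "seg_len l \<le> 1"
    using assms(5) unfolding Xsp_def seg_len_def by auto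
  then have "\<epsilon> * seg_len l powr \<alpha> \<le> \<epsilon>"
    using assms(2,3) by (simp add: mult_left_le powr_le1 seg_len_def)
  moreover have "norm (B l) \<le> \<epsilon> * seg_len l powr \<alpha>"
    using assms(1,5) False unfolding gr_bounded_def seg_len_def by auto
  ultimately show ?thesis
    by linarith
qed

lemma cont_on_X_uniform_limit:
  assumes "\<And>e. 0 < e \<Longrightarrow> \<exists>B. cont_on_X B \<and> (\<forall>l\<in>Xsp. norm (A l - B l) \<le> e)"
  shows "cont_on_X A"
  unfolding cont_on_X_def
proof (intro ballI allI impI)
  fix l e
  assume "l \<in> Xsp" "(0::real) < e"
  then obtain B where "cont_on_X B" and AB: "\<And>m. m \<in> Xsp \<Longrightarrow> norm (A m - B m) \<le> e/3"
    using assms[of "e/3"] by auto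
  moreover have "0 < e/3"
    using \<open>0 < e\<close> by simp
  ultimately obtain \<delta> where "0 < \<delta>"
    and \<delta>: "\<And>m. m \<in> Xsp \<Longrightarrow> seg_dist l m < \<delta> \<Longrightarrow> norm (B m - B l) < e/3"
    using \<open>l \<in> Xsp\<close> unfolding cont_on_X_def by metis
  have "norm (A m - A l) < e" if "m \<in> Xsp" "seg_dist l m < \<delta>" for m
  proof -
    have "norm (A m - A l) = norm ((A m - B m) + (B m - B l) - (A l - B l))"
      by simp
    also have "\<dots> \<le> norm (A m - B m) + norm (B m - B l) + norm (A l - B l)"
      by (meson norm_triangle_le norm_triangle_ineq4 add_right_mono norm_triangle_ineq order_trans)
    also have "\<dots> < e"
      using AB[OF that(1)] AB[OF \<open>l \<in> Xsp\<close>] \<delta>[OF that] by linarith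
    finally show ?thesis .
  qed
  with \<open>0 < \<delta>\<close> show "\<exists>\<delta>>0. \<forall>m\<in>Xsp. seg_dist l m < \<delta> \<longrightarrow> norm (A m - A l) < e"
    by blast
qed

lemma Omega_zero_length:
  assumes "A \<in> Omega" "x \<in> T2"
  shows "A (x, 0) = 0"
proof -
  have "\<forall>v w. norm (v + w) \<le> 1/4 \<longrightarrow> (v = 0 \<or> w = 0 \<or> (\<exists>t>0. w = t *\<^sub>R v)) \<longrightarrow>
      A (x, v + w) = A (x, v) + A (tor_wrap (x + v), w)"
    using assms unfolding Omega_def by blast
  from this[rule_format, of 0 0] have "A (x, 0 + 0) = A (x, 0) + A (tor_wrap (x + 0), 0)"
    by simp
  then show ?thesis
    using tor_wrap_T2[OF assms(2)] by simp
qed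

lemma Omega1_gr_uniform_approx:
  assumes "0 < \<alpha>" "A \<in> Omega1_gr \<alpha>" "0 < e"
  shows "\<exists>F. smooth_form F \<and> (\<forall>l\<in>Xsp. norm (A l - iota F l) \<le> e)"
proof -
  obtain F where "smooth_form F" and F: "gr_bounded \<alpha> e (\<lambda>l. A l - iota F l)"
    using assms(2,3) unfolding Omega1_gr_def by blast
  have "A \<in> Omega"
    using assms(2) unfolding Omega1_gr_def Omega_gr_def by blast
  then have "A (x, 0) - iota F (x, 0) = 0" if "x \<in> T2" for x
    using Omega_zero_length that by (simp add: iota_zero_length)
  then have "\<forall>l\<in>Xsp. norm (A l - iota F l) \<le> e"
    using gr_bounded_imp_norm_le[OF F] assms(1,3) by simp
  with \<open>smooth_form F\<close> show ?thesis
    by blast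
qed

lemma Omega1_gr_ratio_small:
  assumes "0 < \<alpha>" "\<alpha> < 1" "A \<in> Omega1_gr \<alpha>" "0 < e"
  shows "\<exists>r>0. \<forall>l\<in>Xsp. 0 < seg_len l \<longrightarrow> seg_len l < r \<longrightarrow> norm (A l) / seg_len l powr \<alpha> \<le> e"
proof -
  have "0 < e/2"
    using assms(4) by simp
  then obtain F where F: "smooth_form F" "gr_bounded \<alpha> (e/2) (\<lambda>l. A l - iota F l)"
    using assms(3) unfolding Omega1_gr_def by blast
  obtain M where "0 < M" and M: "\<And>i x. norm (F i x) \<le> M"
    using smooth_form_bounded[OF F(1)] by blast
  define r where "r = (e / (4 * M)) powr (1 / (1 - \<alpha>))"
  have "0 < r"
    using \<open>0 < M\<close> assms(4) unfolding r_def by simp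
  have r_powr: "r powr (1 - \<alpha>) = e / (4 * M)"
    using \<open>0 < M\<close> assms(2,4) unfolding r_def powr_powr by simp
  have "norm (A l) / seg_len l powr \<alpha> \<le> e"
    if "l \<in> Xsp" "0 < seg_len l" "seg_len l < r" for l
  proof -
    define s where "s = seg_len l"
    have "0 < s" "0 < s powr \<alpha>"
      using that(2) unfolding s_def by auto
    have "norm (A l) \<le> norm (A l - iota F l) + norm (iota F l)"
      using norm_triangle_ineq[of "A l - iota F l" "iota F l"] by simp
    also have "\<dots> \<le> e/2 * s powr \<alpha> + 2 * M * s"
      using F(2) that(1,2) norm_iota_le[OF F(1) M, of "fst l" "snd l"]
      unfolding gr_bounded_def s_def seg_len_def by (intro add_mono) auto
    finally have "norm (A l) / s powr \<alpha> \<le> e/2 + 2 * M * (s / s powr \<alpha>)"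
      using \<open>0 < s powr \<alpha>\<close> by (simp add: divide_simps)
    also have "s / s powr \<alpha> = s powr (1 - \<alpha>)"
      using \<open>0 < s\<close> by (simp add: powr_diff)
    also have "s powr (1 - \<alpha>) \<le> r powr (1 - \<alpha>)"
      using \<open>0 < s\<close> assms(2) that(3) unfolding s_def by (intro powr_mono2) auto
    finally show ?thesis
      using \<open>0 < M\<close> unfolding r_powr s_def by (simp add: mult_left_mono)
  qed
  with \<open>0 < r\<close> show ?thesis
    by blast
qed

lemma Xsp_short_segment:
  assumes "0 < \<epsilon>"
  shows "\<exists>l\<in>Xsp. 0 < seg_len l \<and> seg_len l < \<epsilon>"
proof -
  define c where "c = min (\<epsilon>/2) (1/4)"
  have "(0, c *\<^sub>R axis 1 1) \<in> Xsp" "seg_len (0, c *\<^sub>R axis 1 1) = c"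
    using assms unfolding Xsp_def T2_def seg_len_def c_def by (auto simp: norm_axis_1)
  moreover have "0 < c" "c < \<epsilon>"
    using assms unfolding c_def by auto
  ultimately show ?thesis
    by metis
qed

lemma SUP_short_tendsto_zero:
  fixes f len :: "'a \<Rightarrow> real"
  assumes nonempty: "\<And>\<epsilon>. 0 < \<epsilon> \<Longrightarrow> \<exists>l\<in>S. 0 < len l \<and> len l < \<epsilon>"
    and nonneg: "\<And>l. l \<in> S \<Longrightarrow> 0 \<le> f l"
    and small: "\<And>e. 0 < e \<Longrightarrow> \<exists>r>0. \<forall>l\<in>S. 0 < len l \<longrightarrow> len l < r \<longrightarrow> f l \<le> e"
  shows "((\<lambda>\<epsilon>. SUP l\<in>{l\<in>S. 0 < len l \<and> len l < \<epsilon>}. f l) \<longlongrightarrow> 0) (at_right 0)"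
  unfolding tendsto_iff
proof (intro allI impI)
  fix e :: real
  assume "0 < e"
  then obtain r where "0 < r" and r: "\<forall>l\<in>S. 0 < len l \<longrightarrow> len l < r \<longrightarrow> f l \<le> e/2"
    using small[of "e/2"] by auto
  show "\<forall>\<^sub>F \<epsilon> in at_right 0. dist (SUP l\<in>{l\<in>S. 0 < len l \<and> len l < \<epsilon>}. f l) 0 < e"
  proof (rule eventually_at_rightI[OF _ \<open>0 < r\<close>])
    fix \<epsilon> :: real
    assume "\<epsilon> \<in> {0<..<r}"
    define T where "T = {l\<in>S. 0 < len l \<and> len l < \<epsilon>}"
    obtain l0 where "l0 \<in> T"
      using nonempty[of \<epsilon>] \<open>\<epsilon> \<in> {0<..<r}\<close> unfolding T_def by auto
    have bound: "f l \<le> e/2" if "l \<in> T" for l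
      using r that \<open>\<epsilon> \<in> {0<..<r}\<close> unfolding T_def by auto
    then have "(SUP l\<in>T. f l) \<le> e/2"
      using \<open>l0 \<in> T\<close> by (intro cSUP_least) auto
    moreover have "f l0 \<le> (SUP l\<in>T. f l)"
      using bound \<open>l0 \<in> T\<close> by (intro cSUP_upper bdd_aboveI2[where M = "e/2"])
    moreover have "0 \<le> f l0"
      using nonneg \<open>l0 \<in> T\<close> unfolding T_def by blast
    ultimately show "dist (SUP l\<in>T. f l) 0 < e"
      using \<open>0 < e\<close> by (simp add: dist_real_def)
  qed
qed

theorem proposition3p25:
  fixes \<alpha> :: real and A :: "(real^2) \<times> (real^2) \<Rightarrow> 'e::banach"
  assumes "0 < \<alpha>" and "\<alpha> < 1" and "A \<in> Omega1_gr \<alpha>"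
  shows "cont_on_X A \<and>
    ((\<lambda>\<epsilon>. SUP l\<in>{l\<in>Xsp. 0 < seg_len l \<and> seg_len l < \<epsilon>}. norm (A l) / seg_len l powr \<alpha>)
       \<longlongrightarrow> 0) (at_right 0)"
proof
  show "cont_on_X A"
    using Omega1_gr_uniform_approx[OF assms(1,3)] cont_on_X_iota
    by (intro cont_on_X_uniform_limit) blast
  show "((\<lambda>\<epsilon>. SUP l\<in>{l\<in>Xsp. 0 < seg_len l \<and> seg_len l < \<epsilon>}. norm (A l) / seg_len l powr \<alpha>)
       \<longlongrightarrow> 0) (at_right 0)"
    using Xsp_short_segment Omega1_gr_ratio_small[OF assms]
    by (intro SUP_short_tendsto_zero) auto
qed

end
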